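(* If $p\in\mathbb{C}[u,\mathbf{v}]$ satisfies $p_N\equiv0$ on $U(N)$ for every $N\ge1$, then $p$ is the zero polynomial.
   Context: $\mathbb{C}[u,\mathbf{v}]$ is the polynomial algebra over $\mathbb{C}$ in $u$ and $v_1,v_2,\dots$. For $p\in\mathbb{C}[u,\mathbf{v}]$, $p_N:U(N)\to M_N(\mathbb{C})$ is $p_N(U)=p(U,\mathrm{tr}(U),\mathrm{tr}(U^2),\dots)$, substituting $u=U$ and $v_j=\mathrm{tr}(U^j)I$, with $\mathrm{tr}(A)=\frac1N\sum_jA_{jj}$. *)

theory Defs
  imports "HOL-Library.Poly_Mapping" "Jordan_Normal_Form.Matrix"
begin

text \<open>A monomial is a finitely supported exponent map
  nat =>0 nat, where variable 0 stands for u and variable j >= 1 stands for v_j.\<close>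

type_synonym cpoly_uv = "(nat \<Rightarrow>\<^sub>0 nat) \<Rightarrow>\<^sub>0 complex"

definition adj_mat :: "complex mat \<Rightarrow> complex mat" where
  "adj_mat A = mat (dim_col A) (dim_row A) (\<lambda>(i, j). cnj (A $$ (j, i)))"

definition unitary_group :: "nat \<Rightarrow> complex mat set" where
  "unitary_group N = {U \<in> carrier_mat N N. U * adj_mat U = 1\<^sub>m N \<and> adj_mat U * U = 1\<^sub>m N}"

definition ntr :: "nat \<Rightarrow> complex mat \<Rightarrow> complex" where
  "ntr N A = (\<Sum>j<N. A $$ (j, j)) / of_nat N"

text \<open>p_N(U) = p(U, tr(U), tr(U^2), ...): substitute u = U and v_j = tr(U^j) I.
  Since the v_j become scalar matrices, each monomial u^a v_1^b1 ... evaluates to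
  (prod_j tr(U^j)^bj) U^a.\<close>

definition eval_pN :: "nat \<Rightarrow> cpoly_uv \<Rightarrow> complex mat \<Rightarrow> complex mat" where
  "eval_pN N p U =
     mat N N (\<lambda>(i, k). \<Sum>m\<in>Poly_Mapping.keys p.
        Poly_Mapping.lookup p m * (\<Prod>j\<in>Poly_Mapping.keys m - {0}. ntr N (U ^\<^sub>m j) ^ Poly_Mapping.lookup m j)
          * (U ^\<^sub>m Poly_Mapping.lookup m 0) $$ (i, k))"

end

theory Submission
  imports Defs "HOL-Computational_Algebra.Polynomial"
begin

text \<open>Evaluate p_N at a diagonal unitary diag(z_1, ..., z_N). The (1,1) entry becomes a
  polynomial in z_1 and in the power sums (1/N) \<Sum>_i z_i^j. Appending to z the K points
  \<zeta>, \<zeta>\<omega>, ..., \<zeta>\<omega>^(K-1), with \<omega> a primitive K-th root of unity, leaves the power sums of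
  order j < K unchanged and shifts the one of order K by K\<zeta>^K, which ranges over a whole
  circle. Since a univariate polynomial vanishing on an infinite set is zero, this isolates
  the exponent of v_K; repeating for v_(K-1), ..., v_1 and finally for u shows that every
  coefficient of p vanishes.\<close>

lemma sum_fiber_eq_0_if_vanishes_on_infinite:
  fixes a :: "'m \<Rightarrow> 'a::idom"
  assumes "finite M" and "infinite S"
    and vanish: "\<And>x. x \<in> S \<Longrightarrow> (\<Sum>m\<in>M. a m * x ^ h m) = 0"
  shows "(\<Sum>m\<in>{m\<in>M. h m = e}. a m) = 0"
proof -
  define q where "q = (\<Sum>m\<in>M. monom (a m) (h m))"
  have "poly q x = (\<Sum>m\<in>M. a m * x ^ h m)" for x
    by (simp add: q_def poly_sum poly_monom)
  with vanish have "S \<subseteq> {x. poly q x = 0}" by auto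
  with \<open>infinite S\<close> have "q = 0" using poly_roots_finite finite_subset by blast
  moreover have "coeff q e = (\<Sum>m\<in>{m\<in>M. h m = e}. a m)"
    using \<open>finite M\<close> by (simp add: q_def coeff_sum coeff_monom sum.inter_filter eq_commute)
  ultimately show ?thesis by simp
qed

lemma infinite_unit_circle: "infinite {x::complex. cmod x = 1}"
proof
  assume "finite {x::complex. cmod x = 1}"
  moreover have "cis ` {0..pi} \<subseteq> {x. cmod x = 1}" by auto
  moreover have "inj_on cis {0..pi}"
    by (rule inj_onI) (metis cis.sel(1) atLeastAtMost_iff cos_inj_pi)
  ultimately have "finite {0..pi}" by (metis finite_imageD finite_subset)
  then show False using infinite_Icc[OF pi_gt_zero] by simp
qed

lemma unit_circle_nth_root:
  assumes "cmod x = 1" and "0 < K"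
  obtains \<zeta> :: complex where "cmod \<zeta> = 1" and "\<zeta> ^ K = x"
proof -
  have "cis (Arg x / real K) ^ K = cis (Arg x)" using assms by (simp add: DeMoivre)
  also have "\<dots> = x" using assms cis_Arg[of x] by (force simp: sgn_eq)
  finally show ?thesis using that[of "cis (Arg x / real K)"] by simp
qed

lemma cis_power_ne_1:
  assumes "0 < j" and "j < K"
  shows "cis (2 * pi / real K) ^ j \<noteq> 1"
proof
  assume "cis (2 * pi / real K) ^ j = 1"
  then have eq: "cis (2 * pi * real j / real K) = cis (2 * pi * real 0 / real K)"
    by (simp add: DeMoivre mult.commute)
  have inj: "inj_on (\<lambda>k. cis (2 * pi * real k / real K)) {..<K}"
    using bij_betw_roots_unity[of K] assms by (simp add: bij_betw_def)
  have "j = 0" by (rule inj_onD[OF inj eq]) (use assms in auto)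
  with assms show False by simp
qed

lemma sum_rotated_roots_of_unity_power:
  assumes "0 < j" and "j \<le> K"
  shows "(\<Sum>i<K. (\<zeta> * cis (2 * pi / real K) ^ i) ^ j) = (if j = K then of_nat K * \<zeta> ^ K else 0)"
proof -
  define w where "w = cis (2 * pi / real K) ^ j"
  have "w ^ K = (cis (2 * pi / real K) ^ K) ^ j"
    by (simp add: w_def flip: power_mult) (simp add: mult.commute)
  also have "\<dots> = 1" using assms by (simp add: DeMoivre)
  finally have wK: "w ^ K = 1" .
  have "(\<Sum>i<K. (\<zeta> * cis (2 * pi / real K) ^ i) ^ j) = \<zeta> ^ j * (\<Sum>i<K. w ^ i)"
    by (simp add: w_def sum_distrib_left power_mult_distrib mult.commute flip: power_mult)
  also have "\<dots> = (if j = K then of_nat K * \<zeta> ^ K else 0)"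
  proof (cases "j = K")
    case True
    then have "w = 1" using assms by (simp add: w_def DeMoivre)
    with True show ?thesis by (simp add: mult.commute)
  next
    case False
    then have "w \<noteq> 1" using assms cis_power_ne_1 by (simp add: w_def)
    with False wK show ?thesis by (simp add: geometric_sum)
  qed
  finally show ?thesis .
qed

definition power_sum :: "nat \<Rightarrow> (nat \<Rightarrow> 'a::comm_semiring_1) \<Rightarrow> nat \<Rightarrow> 'a" where
  "power_sum N z j = (\<Sum>i<N. z i ^ j)"

definition append_rotated_roots :: "nat \<Rightarrow> (nat \<Rightarrow> complex) \<Rightarrow> nat \<Rightarrow> complex \<Rightarrow> nat \<Rightarrow> complex" where
  "append_rotated_roots n z K \<zeta> i = (if i < n then z i else \<zeta> * cis (2 * pi / real K) ^ (i - n))"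

lemma append_rotated_roots_unit:
  assumes "\<forall>i<n. cmod (z i) = 1" and "cmod \<zeta> = 1"
  shows "\<forall>i<n + K. cmod (append_rotated_roots n z K \<zeta> i) = 1"
  using assms by (simp add: append_rotated_roots_def norm_mult norm_power)

lemma power_sum_append_rotated_roots:
  assumes "0 < j" and "j \<le> K"
  shows "power_sum (n + K) (append_rotated_roots n z K \<zeta>) j
       = power_sum n z j + (if j = K then of_nat K * \<zeta> ^ K else 0)"
proof -
  have split: "(\<Sum>i<n + K. f i) = (\<Sum>i<n. f i) + (\<Sum>i<K. f (n + i))" for f :: "nat \<Rightarrow> complex"
    by (induction K) (simp_all add: add.assoc)
  show ?thesis
    unfolding power_sum_def split
    using sum_rotated_roots_of_unity_power[OF assms] by (simp add: append_rotated_roots_def)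
qed

text \<open>The (1,1) entry of the monomial u^e_0 v_1^e_1 ... v_K^e_K at U = diag(z), with v_j
  replaced by s N times the j-th power sum. The theorem needs s N = 1/N, but peeling off the
  last variable shifts N, so the scale is kept arbitrary.\<close>

definition trace_monomial ::
    "nat \<Rightarrow> (nat \<Rightarrow> complex) \<Rightarrow> nat \<Rightarrow> (nat \<Rightarrow> complex) \<Rightarrow> (nat \<Rightarrow> nat) \<Rightarrow> complex" where
  "trace_monomial K s N z e = z 0 ^ e 0 * (\<Prod>j\<in>{1..K}. (s N * power_sum N z j) ^ e j)"

lemma trace_monomial_append_rotated_roots:
  assumes "1 \<le> n"
  shows "trace_monomial (Suc k) s (n + Suc k) (append_rotated_roots n z (Suc k) \<zeta>) e
       = trace_monomial k (\<lambda>N. s (N + Suc k)) n z e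
         * (s (n + Suc k) * (power_sum n z (Suc k) + of_nat (Suc k) * \<zeta> ^ Suc k)) ^ e (Suc k)"
proof -
  let ?z' = "append_rotated_roots n z (Suc k) \<zeta>"
  have "(\<Prod>j\<in>{1..k}. (s (n + Suc k) * power_sum (n + Suc k) ?z' j) ^ e j)
      = (\<Prod>j\<in>{1..k}. (s (n + Suc k) * power_sum n z j) ^ e j)"
  proof (intro prod.cong refl)
    fix j assume "j \<in> {1..k}"
    then have "0 < j" "j \<le> Suc k" "j \<noteq> Suc k" by auto
    then show "(s (n + Suc k) * power_sum (n + Suc k) ?z' j) ^ e j = (s (n + Suc k) * power_sum n z j) ^ e j"
      using power_sum_append_rotated_roots[of j "Suc k" n z \<zeta>] by simp
  qed
  moreover have "?z' 0 = z 0" using assms by (simp add: append_rotated_roots_def)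
  moreover have "power_sum (n + Suc k) ?z' (Suc k) = power_sum n z (Suc k) + of_nat (Suc k) * \<zeta> ^ Suc k"
    using power_sum_append_rotated_roots[of "Suc k" "Suc k" n z \<zeta>] by simp
  ultimately show ?thesis
    by (simp add: trace_monomial_def atLeastAtMostSuc_conv mult_ac)
qed

definition vanishes_on_tori ::
    "nat \<Rightarrow> (nat \<Rightarrow> complex) \<Rightarrow> 'm set \<Rightarrow> ('m \<Rightarrow> complex) \<Rightarrow> ('m \<Rightarrow> nat \<Rightarrow> nat) \<Rightarrow> bool" where
  "vanishes_on_tori K s M c E \<longleftrightarrow>
     (\<forall>N\<ge>1. \<forall>z. (\<forall>i<N. cmod (z i) = 1) \<longrightarrow> (\<Sum>m\<in>M. c m * trace_monomial K s N z (E m)) = 0)"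

lemma vanishes_on_tori_0_fiber:
  assumes "finite M" and "vanishes_on_tori 0 s M c E"
  shows "(\<Sum>m\<in>{m\<in>M. E m 0 = e}. c m) = 0"
proof (rule sum_fiber_eq_0_if_vanishes_on_infinite[OF \<open>finite M\<close> infinite_unit_circle])
  fix x :: complex assume "x \<in> {x. cmod x = 1}"
  then show "(\<Sum>m\<in>M. c m * x ^ E m 0) = 0"
    using assms(2) unfolding vanishes_on_tori_def
    by (auto simp: trace_monomial_def dest: spec[of _ 1] spec[of _ "\<lambda>_. x"])
qed

lemma vanishes_on_tori_Suc_fiber:
  assumes "finite M" and s: "\<forall>N\<ge>1. s N \<noteq> 0" and vanish: "vanishes_on_tori (Suc k) s M c E"
  shows "vanishes_on_tori k (\<lambda>N. s (N + Suc k)) {m\<in>M. E m (Suc k) = e} c E"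
  unfolding vanishes_on_tori_def
proof (intro allI impI)
  fix n :: nat and z :: "nat \<Rightarrow> complex" assume n: "1 \<le> n" and z: "\<forall>i<n. cmod (z i) = 1"
  define K where "K = Suc k"
  \<comment> \<open>the last scaled power sum once the K-th roots of x are appended to z\<close>
  define w where "w x = s (n + K) * (power_sum n z K + of_nat K * x)" for x :: complex
  have "s (n + K) \<noteq> 0" using s n by simp
  moreover have "of_nat K \<noteq> (0::complex)" unfolding K_def of_nat_eq_0_iff by simp
  ultimately have "inj w" by (auto simp: w_def inj_def)
  then have "infinite (w ` {x. cmod x = 1})"
    using infinite_unit_circle finite_imageD inj_on_subset by blast
  moreover have "(\<Sum>m\<in>M. c m * trace_monomial k (\<lambda>N. s (N + K)) n z (E m) * y ^ E m K) = 0"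
    if y: "y \<in> w ` {x. cmod x = 1}" for y
  proof -
    obtain x where x: "cmod x = 1" "y = w x" using y by blast
    obtain \<zeta> where \<zeta>: "cmod \<zeta> = 1" "\<zeta> ^ K = x"
      using unit_circle_nth_root[OF x(1), of K] by (auto simp: K_def)
    have "(\<Sum>m\<in>M. c m * trace_monomial K s (n + K) (append_rotated_roots n z K \<zeta>) (E m)) = 0"
      using vanish append_rotated_roots_unit[OF z \<zeta>(1)] n
      unfolding vanishes_on_tori_def K_def by auto
    moreover have "trace_monomial K s (n + K) (append_rotated_roots n z K \<zeta>) d
        = trace_monomial k (\<lambda>N. s (N + K)) n z d * y ^ d K" for d
      using trace_monomial_append_rotated_roots[OF n, of k s z \<zeta> d] x \<zeta> by (simp add: K_def w_def)
    ultimately show ?thesis by (simp add: mult.assoc)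
  qed
  ultimately show "(\<Sum>m\<in>{m\<in>M. E m (Suc k) = e}. c m * trace_monomial k (\<lambda>N. s (N + Suc k)) n z (E m)) = 0"
    unfolding K_def by (rule sum_fiber_eq_0_if_vanishes_on_infinite[OF \<open>finite M\<close>])
qed

lemma fiber_sum_eq_0_if_vanishes_on_tori:
  assumes "finite M" and "\<forall>N\<ge>1. s N \<noteq> 0" and "vanishes_on_tori K s M c E"
  shows "(\<Sum>m\<in>{m\<in>M. \<forall>j\<le>K. E m j = f j}. c m) = 0"
  using assms
proof (induction K arbitrary: M s)
  case 0
  then show ?case using vanishes_on_tori_0_fiber[of M s c E "f 0"] by simp
next
  case (Suc k)
  let ?M' = "{m\<in>M. E m (Suc k) = f (Suc k)}"
  have "(\<Sum>m\<in>{m\<in>?M'. \<forall>j\<le>k. E m j = f j}. c m) = 0"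
    using Suc.prems vanishes_on_tori_Suc_fiber by (intro Suc.IH[of _ "\<lambda>N. s (N + Suc k)"]) auto
  moreover have "{m\<in>?M'. \<forall>j\<le>k. E m j = f j} = {m\<in>M. \<forall>j\<le>Suc k. E m j = f j}"
    by (auto simp: le_Suc_eq)
  ultimately show ?case by simp
qed

definition diag_matrix :: "nat \<Rightarrow> (nat \<Rightarrow> 'a::zero) \<Rightarrow> 'a mat" where
  "diag_matrix N z = mat N N (\<lambda>(i, k). if i = k then z i else 0)"

lemma diag_matrix_carrier [simp]: "diag_matrix N z \<in> carrier_mat N N"
  by (simp add: diag_matrix_def)

lemma dim_diag_matrix [simp]: "dim_row (diag_matrix N z) = N" "dim_col (diag_matrix N z) = N"
  by (simp_all add: diag_matrix_def)

lemma diag_matrix_mult: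
  fixes a b :: "nat \<Rightarrow> 'a::semiring_0"
  shows "diag_matrix N a * diag_matrix N b = diag_matrix N (\<lambda>i. a i * b i)"
proof (rule eq_matI)
  fix i k assume ik: "i < dim_row (diag_matrix N (\<lambda>i. a i * b i))" "k < dim_col (diag_matrix N (\<lambda>i. a i * b i))"
  have "(diag_matrix N a * diag_matrix N b) $$ (i, k)
      = (\<Sum>l<N. (if i = l then a i else 0) * (if l = k then b l else 0))"
    using ik by (simp add: diag_matrix_def scalar_prod_def row_def col_def atLeast0LessThan)
  also have "\<dots> = (\<Sum>l<N. if l = i then (if i = k then a i * b i else 0) else 0)"
    by (intro sum.cong refl) auto
  also have "\<dots> = diag_matrix N (\<lambda>i. a i * b i) $$ (i, k)"
    using ik by (simp add: diag_matrix_def)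
  finally show "(diag_matrix N a * diag_matrix N b) $$ (i, k) = diag_matrix N (\<lambda>i. a i * b i) $$ (i, k)" .
qed simp_all

lemma one_mat_eq_diag_matrix: "1\<^sub>m N = diag_matrix N (\<lambda>_. 1)"
  by (rule eq_matI) (auto simp: diag_matrix_def)

lemma diag_matrix_power:
  fixes z :: "nat \<Rightarrow> 'a::comm_semiring_1"
  shows "diag_matrix N z ^\<^sub>m j = diag_matrix N (\<lambda>i. z i ^ j)"
  by (induction j) (simp_all add: one_mat_eq_diag_matrix diag_matrix_mult mult.commute)

lemma adj_mat_diag_matrix: "adj_mat (diag_matrix N z) = diag_matrix N (\<lambda>i. cnj (z i))"
  by (rule eq_matI) (auto simp: diag_matrix_def adj_mat_def)

lemma diag_matrix_unitary:
  assumes "\<forall>i<N. cmod (z i) = 1"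
  shows "diag_matrix N z \<in> unitary_group N"
proof -
  have "z i * cnj (z i) = 1" if "i < N" for i
    using complex_norm_square[of "z i"] assms that by simp
  then have "diag_matrix N (\<lambda>i. z i * cnj (z i)) = 1\<^sub>m N"
    "diag_matrix N (\<lambda>i. cnj (z i) * z i) = 1\<^sub>m N"
    by (auto simp: diag_matrix_def mult.commute intro!: eq_matI)
  then show ?thesis
    by (simp add: unitary_group_def adj_mat_diag_matrix diag_matrix_mult)
qed

lemma ntr_diag_matrix_power: "ntr N (diag_matrix N z ^\<^sub>m j) = inverse (of_nat N) * power_sum N z j"
  unfolding ntr_def diag_matrix_power by (simp add: diag_matrix_def power_sum_def field_simps)

lemma eval_pN_diag_matrix_entry:
  assumes "1 \<le> N"
    and keys_le: "\<And>m. m \<in> Poly_Mapping.keys p \<Longrightarrow> Poly_Mapping.keys m \<subseteq> {..K}"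
  shows "eval_pN N p (diag_matrix N z) $$ (0, 0)
       = (\<Sum>m\<in>Poly_Mapping.keys p. Poly_Mapping.lookup p m
            * trace_monomial K (\<lambda>N. inverse (of_nat N)) N z (Poly_Mapping.lookup m))"
proof -
  let ?v = "\<lambda>j. inverse (of_nat N) * power_sum N z j"
  have "eval_pN N p (diag_matrix N z) $$ (0, 0)
      = (\<Sum>m\<in>Poly_Mapping.keys p. Poly_Mapping.lookup p m
          * (\<Prod>j\<in>Poly_Mapping.keys m - {0}. ?v j ^ Poly_Mapping.lookup m j)
          * z 0 ^ Poly_Mapping.lookup m 0)"
    using assms(1) unfolding eval_pN_def ntr_diag_matrix_power unfolding diag_matrix_power
    by (simp add: diag_matrix_def)
  also have "\<dots> = (\<Sum>m\<in>Poly_Mapping.keys p. Poly_Mapping.lookup p m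
            * trace_monomial K (\<lambda>N. inverse (of_nat N)) N z (Poly_Mapping.lookup m))"
  proof (intro sum.cong refl)
    fix m assume m: "m \<in> Poly_Mapping.keys p"
    have "(\<Prod>j\<in>Poly_Mapping.keys m - {0}. ?v j ^ Poly_Mapping.lookup m j)
        = (\<Prod>j\<in>{1..K}. ?v j ^ Poly_Mapping.lookup m j)"
      using keys_le[OF m] by (intro prod.mono_neutral_left) (auto simp: in_keys_iff, metis gr0I power_0)
    then show "Poly_Mapping.lookup p m * (\<Prod>j\<in>Poly_Mapping.keys m - {0}. ?v j ^ Poly_Mapping.lookup m j)
          * z 0 ^ Poly_Mapping.lookup m 0
        = Poly_Mapping.lookup p m * trace_monomial K (\<lambda>N. inverse (of_nat N)) N z (Poly_Mapping.lookup m)"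
      by (simp add: trace_monomial_def)
  qed
  finally show ?thesis .
qed

lemma vanishes_on_tori_if_eval_pN_vanishes:
  assumes "\<forall>N\<ge>1. \<forall>U\<in>unitary_group N. eval_pN N p U = 0\<^sub>m N N"
    and "\<And>m. m \<in> Poly_Mapping.keys p \<Longrightarrow> Poly_Mapping.keys m \<subseteq> {..K}"
  shows "vanishes_on_tori K (\<lambda>N. inverse (of_nat N)) (Poly_Mapping.keys p) (Poly_Mapping.lookup p)
      Poly_Mapping.lookup"
  unfolding vanishes_on_tori_def
proof (intro allI impI)
  fix N :: nat and z assume N: "1 \<le> N" and "\<forall>i<N. cmod (z i) = 1"
  then have "eval_pN N p (diag_matrix N z) = 0\<^sub>m N N"
    using assms(1) diag_matrix_unitary by blast
  then show "(\<Sum>m\<in>Poly_Mapping.keys p. Poly_Mapping.lookup p m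
      * trace_monomial K (\<lambda>N. inverse (of_nat N)) N z (Poly_Mapping.lookup m)) = 0"
    using eval_pN_diag_matrix_entry[where p = p and z = z, OF N assms(2)] N by simp
qed

lemma poly_mapping_eq_iff_lookup_eq_on:
  assumes "Poly_Mapping.keys m \<subseteq> A" and "Poly_Mapping.keys m' \<subseteq> A"
  shows "m = m' \<longleftrightarrow> (\<forall>j\<in>A. Poly_Mapping.lookup m j = Poly_Mapping.lookup m' j)"
proof
  assume agree: "\<forall>j\<in>A. Poly_Mapping.lookup m j = Poly_Mapping.lookup m' j"
  show "m = m'"
  proof (rule poly_mapping_eqI)
    fix j show "Poly_Mapping.lookup m j = Poly_Mapping.lookup m' j"
    proof (cases "j \<in> A")
      case False
      then have "j \<notin> Poly_Mapping.keys m" "j \<notin> Poly_Mapping.keys m'" using assms by auto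
      then show ?thesis by (simp add: in_keys_iff)
    qed (use agree in simp)
  qed
qed simp

theorem mainTheorem13:
  fixes p :: cpoly_uv
  assumes "\<forall>N\<ge>1. \<forall>U\<in>unitary_group N. eval_pN N p U = 0\<^sub>m N N"
  shows "p = 0"
proof (rule ccontr)
  assume "p \<noteq> 0"
  then obtain m0 where m0: "m0 \<in> Poly_Mapping.keys p" by (metis keys_eq_empty ex_in_conv)
  define K where "K = Max (\<Union>m\<in>Poly_Mapping.keys p. Poly_Mapping.keys m)"
  have keys_le: "Poly_Mapping.keys m \<subseteq> {..K}" if "m \<in> Poly_Mapping.keys p" for m
    unfolding K_def using that by (auto intro: Max_ge)
  have "vanishes_on_tori K (\<lambda>N. inverse (of_nat N)) (Poly_Mapping.keys p) (Poly_Mapping.lookup p)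
      Poly_Mapping.lookup"
    using assms keys_le by (rule vanishes_on_tori_if_eval_pN_vanishes)
  then have "(\<Sum>m\<in>{m\<in>Poly_Mapping.keys p. \<forall>j\<le>K. Poly_Mapping.lookup m j = Poly_Mapping.lookup m0 j}.
      Poly_Mapping.lookup p m) = 0"
    by (intro fiber_sum_eq_0_if_vanishes_on_tori) auto
  moreover have "{m\<in>Poly_Mapping.keys p. \<forall>j\<le>K. Poly_Mapping.lookup m j = Poly_Mapping.lookup m0 j} = {m0}"
    using m0 keys_le poly_mapping_eq_iff_lookup_eq_on[of _ "{..K}" m0] by auto
  ultimately show False using m0 by (simp add: in_keys_iff)
qed

end
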